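(* The automorphism group $\Gamma(S)$ of the separation relation $S$ on $\mathbb Q\times\mathbb Z$ consists exactly of \begin{itemize} \item all positive permutations of $\mathbb Q\times\mathbb Z$ that initiate a permutation $h$ of $\mathbb Q$ of rotation type, and \item all negative permutations of $\mathbb Q\times\mathbb Z$ that initiate a permutation $h$ of $\mathbb Q$ of reflection type. \end{itemize}
   Context: $\mathbb Q\times\mathbb Z$ denotes the set $\mathbb Q\times\mathbb Z$ with the lexicographic order: $(r,z)<(r',z')$ iff $r<r'$, or $r=r'$ and $z<z'$. Relations defined by order formulas are interpreted on $\mathbb Q\times\mathbb Z$ by the same formulas: $B(a,b,c)\iff(a<b<c)\vee(a>b>c)$ and $S(a,b,c,d)\iff(B(a,b,c)\vee B(a,d,c))\wedge(B(b,a,d)\vee B(b,c,d))$; $\Gamma(R)$ is the group of permutations of $\mathbb Q\times\mathbb Z$ preserving $R$. A vertical is a set $\{r\}\times\mathbb Z$. A permutation $g$ is systemic if it maps every vertical onto a vertical; it initiates the permutation $h$ of $\mathbb Q$ with $g(\{a\}\times\mathbb Z)=\{h(a)\}\times\mathbb Z$. A systemic permutation is positive if it preserves the order on each vertical and negative if it reverses the order on each vertical. A section of $\mathbb Q$ is a pair $\{I_1,I_2\}$ with $I_1\cup I_2=\mathbb Q$, $I_1\cap I_2=\emptyset$, and $a<b$ for all $a\in I_1,b\in I_2$ (one of them may be empty). A permutation $h$ of $\mathbb Q$ is of rotation type if for some section $\{I_1,I_2\}$, $h$ is increasing on $I_1$ and on $I_2$ and $h(a)>h(b)$ for all $a\in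 I_1$, $b\in I_2$; it is of reflection type if for some section $\{I_1,I_2\}$, $h$ is decreasing on $I_1$ and on $I_2$ and $h(a)<h(b)$ for all $a\in I_1$, $b\in I_2$. (The automorphism group of $\langle\mathbb Q,S\rangle$ is the set of permutations of $\mathbb Q$ of rotation or reflection type.) *)

theory Defs
  imports Complex_Main
begin

type_synonym qz = "rat \<times> int"

definition qz_less :: "qz \<Rightarrow> qz \<Rightarrow> bool" where
  "qz_less p q \<longleftrightarrow> fst p < fst q \<or> (fst p = fst q \<and> snd p < snd q)"

definition Btw :: "qz \<Rightarrow> qz \<Rightarrow> qz \<Rightarrow> bool" where
  "Btw a b c \<longleftrightarrow> (qz_less a b \<and> qz_less b c) \<or> (qz_less b a \<and> qz_less c b)"

definition Sep :: "qz \<Rightarrow> qz \<Rightarrow> qz \<Rightarrow> qz \<Rightarrow> bool" where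
  "Sep a b c d \<longleftrightarrow> (Btw a b c \<or> Btw a d c) \<and> (Btw b a d \<or> Btw b c d)"

definition Gamma_Sep :: "(qz \<Rightarrow> qz) set" where
  "Gamma_Sep = {g. bij g \<and>
     (\<forall>a b c d. Sep a b c d \<longleftrightarrow> Sep (g a) (g b) (g c) (g d))}"

definition vertical :: "rat \<Rightarrow> qz set" where
  "vertical r = {r} \<times> UNIV"

definition systemic :: "(qz \<Rightarrow> qz) \<Rightarrow> bool" where
  "systemic g \<longleftrightarrow> (\<forall>r. \<exists>r'. g ` vertical r = vertical r')"

definition initiates :: "(qz \<Rightarrow> qz) \<Rightarrow> (rat \<Rightarrow> rat) \<Rightarrow> bool" where
  "initiates g h \<longleftrightarrow> systemic g \<and> (\<forall>a. g ` vertical a = vertical (h a))"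

definition positive :: "(qz \<Rightarrow> qz) \<Rightarrow> bool" where
  "positive g \<longleftrightarrow> systemic g \<and>
     (\<forall>r z z'. z < z' \<longrightarrow> qz_less (g (r, z)) (g (r, z')))"

definition negative :: "(qz \<Rightarrow> qz) \<Rightarrow> bool" where
  "negative g \<longleftrightarrow> systemic g \<and>
     (\<forall>r z z'. z < z' \<longrightarrow> qz_less (g (r, z')) (g (r, z)))"

text \<open>A section {I1, I2} of Q, with I1 the lower part (either may be empty).\<close>
definition is_section :: "rat set \<Rightarrow> rat set \<Rightarrow> bool" where
  "is_section I1 I2 \<longleftrightarrow> I1 \<union> I2 = UNIV \<and> I1 \<inter> I2 = {} \<and>
     (\<forall>a\<in>I1. \<forall>b\<in>I2. a < b)"

definition rotation_type :: "(rat \<Rightarrow> rat) \<Rightarrow> bool" where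
  "rotation_type h \<longleftrightarrow> bij h \<and> (\<exists>I1 I2. is_section I1 I2 \<and>
     strict_mono_on I1 h \<and> strict_mono_on I2 h \<and>
     (\<forall>a\<in>I1. \<forall>b\<in>I2. h a > h b))"

definition reflection_type :: "(rat \<Rightarrow> rat) \<Rightarrow> bool" where
  "reflection_type h \<longleftrightarrow> bij h \<and> (\<exists>I1 I2. is_section I1 I2 \<and>
     strict_antimono_on I1 h \<and> strict_antimono_on I2 h \<and>
     (\<forall>a\<in>I1. \<forall>b\<in>I2. h a < h b))"

end

(*
  S is the separation relation of the cyclic order obtained from the linear order of
  Q x Z, and a permutation preserves S exactly when it preserves or reverses that cyclic order.
  A permutation g preserving the cyclic order of any linear order is a "rotation": for the down-set
  I of points after which g descends somewhere, g is increasing on I and on its complement and maps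
  I above the complement.  On Q x Z the cut cannot split a vertical, since otherwise the image of
  the first point above the cut would be a least element; as g then preserves immediate successors
  within each side, it translates every vertical onto a vertical, and the induced map of Q is of
  rotation type.  Conversely such permutations are rotations.  Composing with the point reflection
  p \<mapsto> -p, which reverses the order, turns the reversing case into the preserving one and
  reflection type into rotation type.
*)

theory Submission
  imports Defs "HOL-Library.Product_Lexorder" "HOL-Library.Product_Plus"
begin

section \<open>Cyclic order and separation on a linear order\<close>

definition cyclic :: "'a::linorder \<Rightarrow> 'a \<Rightarrow> 'a \<Rightarrow> bool" where
  "cyclic x y z \<longleftrightarrow> (x < y \<and> y < z) \<or> (y < z \<and> z < x) \<or> (z < x \<and> x < y)"

definition btw :: "'a::linorder \<Rightarrow> 'a \<Rightarrow> 'a \<Rightarrow> bool" where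
  "btw a b c \<longleftrightarrow> (a < b \<and> b < c) \<or> (b < a \<and> c < b)"

definition sep :: "'a::linorder \<Rightarrow> 'a \<Rightarrow> 'a \<Rightarrow> 'a \<Rightarrow> bool" where
  "sep a b c d \<longleftrightarrow> (btw a b c \<or> btw a d c) \<and> (btw b a d \<or> btw b c d)"

lemma qz_less_iff_less: "qz_less p q \<longleftrightarrow> p < q"
  by (cases p; cases q) (auto simp: qz_less_def less_prod_def)

lemma Sep_eq_sep: "Sep = sep"
  by (intro ext) (simp add: Sep_def sep_def Btw_def btw_def qz_less_iff_less)

lemma sep_imp_distinct: "sep a b c d \<Longrightarrow> distinct [a, b, c, d]"
  unfolding sep_def btw_def by auto

lemma sep_iff_cyclic:
  "distinct [a, b, c, d::'a::linorder] \<Longrightarrow> sep a b c d \<longleftrightarrow> cyclic a c b \<noteq> cyclic a c d"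
  unfolding sep_def btw_def cyclic_def
  by (simp add: neq_iff) (smt (verit) order.strict_trans not_less_iff_gr_or_eq)

lemma cyclic_rotate: "cyclic x y z \<longleftrightarrow> cyclic y z x"
  unfolding cyclic_def by auto

lemma cyclic_swap: "distinct [x, y, z] \<Longrightarrow> cyclic x z y \<longleftrightarrow> \<not> cyclic x y z"
  unfolding cyclic_def by auto

definition cyclic_preserving :: "('a::linorder \<Rightarrow> 'b::linorder) \<Rightarrow> bool" where
  "cyclic_preserving g \<longleftrightarrow>
     (\<forall>x y z. distinct [x, y, z] \<longrightarrow> (cyclic x y z \<longleftrightarrow> cyclic (g x) (g y) (g z)))"

definition cyclic_reversing :: "('a::linorder \<Rightarrow> 'b::linorder) \<Rightarrow> bool" where
  "cyclic_reversing g \<longleftrightarrow>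
     (\<forall>x y z. distinct [x, y, z] \<longrightarrow> (cyclic x y z \<longleftrightarrow> \<not> cyclic (g x) (g y) (g z)))"

lemma sep_invariant_if_cyclic_preserving_or_reversing:
  assumes "inj g" and "cyclic_preserving g \<or> cyclic_reversing g"
  shows "sep a b c d \<longleftrightarrow> sep (g a) (g b) (g c) (g d)"
proof (cases "distinct [a, b, c, d]")
  case False
  then have "\<not> distinct [g a, g b, g c, g d]"
    using \<open>inj g\<close> by (auto dest: injD)
  with False show ?thesis
    using sep_imp_distinct[of a b c d] sep_imp_distinct[of "g a" "g b" "g c" "g d"] by blast
next
  case True
  moreover have "distinct [g a, g b, g c, g d]"
    using True \<open>inj g\<close> by (auto simp: inj_eq)
  moreover have "distinct [a, c, b]" "distinct [a, c, d]"
    using True by auto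
  ultimately show ?thesis
    using assms(2) sep_iff_cyclic[of a b c d] sep_iff_cyclic[of "g a" "g b" "g c" "g d"]
    unfolding cyclic_preserving_def cyclic_reversing_def by metis
qed

text \<open>Any two distinct triples are connected by such moves through three fresh points.\<close>
lemma constant_on_distinct_triples:
  fixes \<sigma> :: "'a \<Rightarrow> 'a \<Rightarrow> 'a \<Rightarrow> bool"
  assumes inf: "infinite (UNIV :: 'a set)"
    and rotate: "\<And>x y z. \<sigma> x y z = \<sigma> y z x"
    and replace: "\<And>a b c d. distinct [a, b, c, d] \<Longrightarrow> \<sigma> a b c = \<sigma> a b d"
    and "distinct [a, b, c]" "distinct [x, y, z]"
  shows "\<sigma> a b c = \<sigma> x y z"
proof -
  have replace_first: "\<sigma> d b c = \<sigma> a b c" if "distinct [a, b, c, d]" for a b c d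
  proof -
    have "\<sigma> d b c = \<sigma> b c d" by (rule rotate)
    also have "\<dots> = \<sigma> b c a" using replace[of b c a d] that by auto
    also have "\<dots> = \<sigma> a b c" by (rule rotate[symmetric])
    finally show ?thesis .
  qed
  have replace_middle: "\<sigma> a d c = \<sigma> a b c" if "distinct [a, b, c, d]" for a b c d
  proof -
    have "\<sigma> a d c = \<sigma> c a d" using rotate by metis
    also have "\<dots> = \<sigma> c a b" using replace[of c a b d] that by auto
    also have "\<dots> = \<sigma> a b c" using rotate by metis
    finally show ?thesis .
  qed
  obtain w1 where w1: "w1 \<notin> {a, b, c, x, y, z}"
    using ex_new_if_finite[OF inf, of "{a, b, c, x, y, z}"] by auto
  obtain w2 where w2: "w2 \<notin> {a, b, c, x, y, z, w1}"
    using ex_new_if_finite[OF inf, of "{a, b, c, x, y, z, w1}"] by auto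
  obtain w3 where w3: "w3 \<notin> {a, b, c, x, y, z, w1, w2}"
    using ex_new_if_finite[OF inf, of "{a, b, c, x, y, z, w1, w2}"] by auto
  have "\<sigma> a b c = \<sigma> a b w1" using replace[of a b c w1] assms(4) w1 by auto
  also have "\<dots> = \<sigma> a w2 w1" using replace_middle[of a b w1 w2] assms(4) w1 w2 by auto
  also have "\<dots> = \<sigma> w3 w2 w1" using replace_first[of a w2 w1 w3] assms(4) w1 w2 w3 by auto
  also have "\<dots> = \<sigma> x w2 w1" using replace_first[of x w2 w1 w3] assms(5) w1 w2 w3 by auto
  also have "\<dots> = \<sigma> x y w1" using replace_middle[of x y w1 w2] assms(5) w1 w2 by auto
  also have "\<dots> = \<sigma> x y z" using replace[of x y z w1] assms(5) w1 by auto
  finally show ?thesis .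
qed

lemma cyclic_preserving_or_reversing_if_sep_invariant:
  fixes g :: "'a::linorder \<Rightarrow> 'b::linorder"
  assumes "infinite (UNIV :: 'a set)" and "inj g"
    and sep_inv: "\<And>a b c d. sep a b c d \<longleftrightarrow> sep (g a) (g b) (g c) (g d)"
  shows "cyclic_preserving g \<or> cyclic_reversing g"
proof -
  define \<sigma> where "\<sigma> x y z \<longleftrightarrow> (cyclic x y z \<longleftrightarrow> cyclic (g x) (g y) (g z))" for x y z
  have rotate: "\<sigma> x y z = \<sigma> y z x" for x y z
    unfolding \<sigma>_def using cyclic_rotate[of x y z] cyclic_rotate[of "g x" "g y" "g z"] by blast
  have replace: "\<sigma> a b c = \<sigma> a b d" if "distinct [a, b, c, d]" for a b c d
  proof -
    have "distinct [a, c, b, d]" "distinct [g a, g c, g b, g d]"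
      using that \<open>inj g\<close> by (auto simp: inj_eq)
    then show ?thesis
      using sep_inv[of a c b d] sep_iff_cyclic[of a c b d] sep_iff_cyclic[of "g a" "g c" "g b" "g d"]
      unfolding \<sigma>_def by blast
  qed
  have \<sigma>_constant: "\<sigma> a b c = \<sigma> x y z" if "distinct [a, b, c]" "distinct [x, y, z]"
    for a b c x y z
    using constant_on_distinct_triples[OF assms(1) rotate replace that] .
  show ?thesis
  proof (cases "\<forall>x y z. distinct [x, y, z] \<longrightarrow> \<sigma> x y z")
    case True
    then show ?thesis unfolding cyclic_preserving_def \<sigma>_def by blast
  next
    case False
    then have "\<forall>x y z. distinct [x, y, z] \<longrightarrow> \<not> \<sigma> x y z"
      using \<sigma>_constant by blast
    then show ?thesis unfolding cyclic_reversing_def \<sigma>_def by blast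
  qed
qed

lemma Gamma_Sep_iff:
  "g \<in> Gamma_Sep \<longleftrightarrow> bij g \<and> (cyclic_preserving g \<or> cyclic_reversing g)"
proof -
  have "infinite (UNIV :: qz set)" by (simp add: finite_prod infinite_UNIV_int)
  then show ?thesis
    unfolding Gamma_Sep_def Sep_eq_sep
    using cyclic_preserving_or_reversing_if_sep_invariant[of g]
      sep_invariant_if_cyclic_preserving_or_reversing[of g]
    by (auto dest: bij_is_inj)
qed

lemma cyclic_preserving_iff_increasing_triples:
  fixes g :: "'a::linorder \<Rightarrow> 'b::linorder"
  shows "cyclic_preserving g \<longleftrightarrow> (\<forall>x y z. x < y \<longrightarrow> y < z \<longrightarrow> cyclic (g x) (g y) (g z))"
proof
  assume preserving: "cyclic_preserving g"
  show "\<forall>x y z. x < y \<longrightarrow> y < z \<longrightarrow> cyclic (g x) (g y) (g z)"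
  proof (intro allI impI)
    fix x y z :: 'a assume "x < y" "y < z"
    then have "distinct [x, y, z]" "cyclic x y z" unfolding cyclic_def by auto
    then show "cyclic (g x) (g y) (g z)"
      using preserving unfolding cyclic_preserving_def by blast
  qed
next
  assume increasing: "\<forall>x y z. x < y \<longrightarrow> y < z \<longrightarrow> cyclic (g x) (g y) (g z)"
  have forward: "cyclic (g x) (g y) (g z)" if xyz: "cyclic x y z" for x y z :: 'a
  proof -
    consider "x < y" "y < z" | "y < z" "z < x" | "z < x" "x < y"
      using xyz unfolding cyclic_def by blast
    then show ?thesis
      using increasing cyclic_rotate by metis
  qed
  show "cyclic_preserving g"
    unfolding cyclic_preserving_def
  proof (intro allI impI iffI)
    fix x y z :: 'a assume "distinct [x, y, z]" "cyclic (g x) (g y) (g z)"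
    moreover have "\<not> cyclic (g x) (g z) (g y)"
      using \<open>cyclic (g x) (g y) (g z)\<close> unfolding cyclic_def by auto
    ultimately show "cyclic x y z"
      using forward cyclic_swap by blast
  qed (rule forward)
qed

section \<open>Rotation cuts\<close>

text \<open>The linear-order picture of a cyclic-order automorphism: a down-set \<open>I\<close> and its
  complement are each mapped increasingly, with the image of \<open>I\<close> placed above that of \<open>-I\<close>.\<close>
definition rotation_cut :: "'a::linorder set \<Rightarrow> ('a \<Rightarrow> 'b::linorder) \<Rightarrow> bool" where
  "rotation_cut I g \<longleftrightarrow> (\<forall>x y. x < y \<longrightarrow> y \<in> I \<longrightarrow> x \<in> I) \<and>
     strict_mono_on I g \<and> strict_mono_on (- I) g \<and> (\<forall>a\<in>I. \<forall>b. b \<notin> I \<longrightarrow> g b < g a)"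

lemma rotation_cutD:
  assumes "rotation_cut I g"
  shows rotation_cut_down_closed: "\<And>x y. x < y \<Longrightarrow> y \<in> I \<Longrightarrow> x \<in> I"
    and rotation_cut_mono_inside: "\<And>x y. x < y \<Longrightarrow> x \<in> I \<Longrightarrow> y \<in> I \<Longrightarrow> g x < g y"
    and rotation_cut_mono_outside: "\<And>x y. x < y \<Longrightarrow> x \<notin> I \<Longrightarrow> y \<notin> I \<Longrightarrow> g x < g y"
    and rotation_cut_crossing: "\<And>a b. a \<in> I \<Longrightarrow> b \<notin> I \<Longrightarrow> g b < g a"
  using assms unfolding rotation_cut_def by (auto dest: strict_mono_onD)

lemma rotation_cutI:
  assumes "\<And>x y. x < y \<Longrightarrow> y \<in> I \<Longrightarrow> x \<in> I"
    and "\<And>x y. x < y \<Longrightarrow> x \<in> I \<longleftrightarrow> y \<in> I \<Longrightarrow> g x < g y"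
    and "\<And>a b. a \<in> I \<Longrightarrow> b \<notin> I \<Longrightarrow> g b < g a"
  shows "rotation_cut I g"
  unfolding rotation_cut_def
  by (intro conjI allI impI ballI strict_mono_onI) (use assms in auto)

lemma rotation_cut_less_iff:
  assumes "rotation_cut I g" and "x \<in> I \<longleftrightarrow> y \<in> I"
  shows "g x < g y \<longleftrightarrow> x < y"
  using rotation_cutD[OF assms(1)] assms(2) by (metis less_asym' linorder_neqE)

lemma cyclic_preserving_if_rotation_cut:
  fixes g :: "'a::linorder \<Rightarrow> 'b::linorder"
  assumes cut: "rotation_cut I g"
  shows "cyclic_preserving g"
  unfolding cyclic_preserving_iff_increasing_triples
proof (intro allI impI)
  fix x y z :: 'a assume "x < y" "y < z"
  then consider "z \<in> I" "y \<in> I" "x \<in> I" | "z \<notin> I" "y \<in> I" "x \<in> I"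
    | "z \<notin> I" "y \<notin> I" "x \<in> I" | "z \<notin> I" "y \<notin> I" "x \<notin> I"
    using rotation_cut_down_closed[OF cut] by blast
  then show "cyclic (g x) (g y) (g z)"
  proof cases
    case 1
    then have "g x < g y" "g y < g z"
      using rotation_cut_mono_inside[OF cut] \<open>x < y\<close> \<open>y < z\<close> by blast+
    then show ?thesis unfolding cyclic_def by blast
  next
    case 2
    then have "g x < g y" "g z < g x"
      using rotation_cut_mono_inside[OF cut] rotation_cut_crossing[OF cut] \<open>x < y\<close> by blast+
    then show ?thesis unfolding cyclic_def by blast
  next
    case 3
    then have "g y < g z" "g z < g x"
      using rotation_cut_mono_outside[OF cut] rotation_cut_crossing[OF cut] \<open>y < z\<close> by blast+
    then show ?thesis unfolding cyclic_def by blast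
  next
    case 4
    then have "g x < g y" "g y < g z"
      using rotation_cut_mono_outside[OF cut] \<open>x < y\<close> \<open>y < z\<close> by blast+
    then show ?thesis unfolding cyclic_def by blast
  qed
qed

lemma rotation_cut_if_cyclic_preserving:
  fixes g :: "'a::linorder \<Rightarrow> 'b::linorder"
  assumes "inj g" and "cyclic_preserving g"
  shows "rotation_cut {x. \<exists>y. x < y \<and> g y < g x} g"
proof -
  define I where "I = {x. \<exists>y. x < y \<and> g y < g x}"
  have increasing: "cyclic (g x) (g y) (g z)" if "x < y" "y < z" for x y z
    using assms(2) that unfolding cyclic_preserving_iff_increasing_triples by blast
  have down_closed: "x \<in> I" if "x < y" "y \<in> I" for x y
  proof -
    obtain w where w: "y < w" "g w < g y" using \<open>y \<in> I\<close> unfolding I_def by auto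
    then have "cyclic (g x) (g y) (g w)" using increasing \<open>x < y\<close> by blast
    then have "g w < g x" using w unfolding cyclic_def by auto
    moreover have "x < w" using \<open>x < y\<close> w(1) by order
    ultimately show ?thesis unfolding I_def by blast
  qed
  have mono_inside: "g x < g y" if "x < y" "y \<in> I" for x y
  proof -
    obtain w where w: "y < w" "g w < g y" using \<open>y \<in> I\<close> unfolding I_def by auto
    then have "cyclic (g x) (g y) (g w)" using increasing \<open>x < y\<close> by blast
    then show ?thesis using w unfolding cyclic_def by auto
  qed
  have mono_outside: "g x < g y" if "x < y" "x \<notin> I" for x y
  proof -
    have "\<not> g y < g x" using that unfolding I_def by auto
    moreover have "g x \<noteq> g y" using \<open>inj g\<close> \<open>x < y\<close> by (auto dest: injD)
    ultimately show ?thesis by auto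
  qed
  have crossing: "g b < g a" if "a \<in> I" "b \<notin> I" for a b
  proof (rule ccontr)
    assume "\<not> g b < g a"
    moreover have "a < b" using down_closed that by (metis linorder_neqE)
    moreover have "g a \<noteq> g b" using \<open>inj g\<close> \<open>a < b\<close> by (auto dest: injD)
    ultimately have "g a < g b" by auto
    obtain w where w: "a < w" "g w < g a" using \<open>a \<in> I\<close> unfolding I_def by auto
    consider "w \<le> b" | "b < w" by fastforce
    then show False
    proof cases
      case 1
      with w have "cyclic (g a) (g w) (g b) \<or> w = b"
        using increasing by (auto simp: order.order_iff_strict)
      then show False using w \<open>g a < g b\<close> unfolding cyclic_def by auto
    next
      case 2
      then show False using mono_outside[of b w] \<open>b \<notin> I\<close> w \<open>g a < g b\<close> by auto
    qed
  qed
  show ?thesis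
    unfolding rotation_cut_def I_def[symmetric]
    using down_closed mono_inside mono_outside crossing
    by (auto intro!: strict_mono_onI)
qed

lemma rotation_cut_minimum:
  assumes cut: "rotation_cut I g" and "surj g"
    and "b \<notin> I" and least: "\<And>x. x \<notin> I \<Longrightarrow> b \<le> x"
  shows "g b \<le> y"
proof -
  obtain x where "y = g x" using \<open>surj g\<close> by (metis surjD)
  show ?thesis
  proof (cases "x \<in> I")
    case True
    then show ?thesis using rotation_cut_crossing[OF cut _ \<open>b \<notin> I\<close>] \<open>y = g x\<close> by fastforce
  next
    case False
    then have "b = x \<or> b < x" using least by fastforce
    then show ?thesis
      using rotation_cut_mono_outside[OF cut] \<open>b \<notin> I\<close> False \<open>y = g x\<close> by fastforce
  qed
qed

lemma rotation_cut_preserves_cover: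
  assumes cut: "rotation_cut I g" and "surj g" and "x \<in> I \<longleftrightarrow> y \<in> I"
    and "x < y" and cover: "\<nexists>c. x < c \<and> c < y"
  shows "g x < g y" and "\<nexists>c. g x < c \<and> c < g y"
proof -
  show "g x < g y" using rotation_cut_less_iff[OF cut assms(3)] \<open>x < y\<close> by blast
  show "\<nexists>c. g x < c \<and> c < g y"
  proof
    assume "\<exists>c. g x < c \<and> c < g y"
    then obtain w where w: "g x < g w" "g w < g y" using \<open>surj g\<close> by (metis surjD)
    show False
    proof (cases "w \<in> I \<longleftrightarrow> x \<in> I")
      case True
      then have "x < w" "w < y"
        using w rotation_cut_less_iff[OF cut] assms(3) by blast+
      then show False using cover by blast
    next
      case False
      then show False
        using w rotation_cut_crossing[OF cut] assms(3) by (metis less_asym)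
    qed
  qed
qed

lemma int_exists_step:
  fixes P :: "int \<Rightarrow> bool"
  assumes "P u" and "\<not> P v" and "u < v"
  shows "\<exists>k. P k \<and> \<not> P (k + 1)"
proof (rule ccontr)
  assume no_step: "\<nexists>k. P k \<and> \<not> P (k + 1)"
  have "P (u + i)" if "0 \<le> i" for i
    using that
  proof (induction i rule: int_ge_induct)
    case (step i)
    then show ?case using no_step by (metis add.assoc)
  qed (simp add: \<open>P u\<close>)
  from this[of "v - u"] show False using assms by simp
qed

section \<open>Cyclic automorphisms of \<open>Q \<times> Z\<close>\<close>

lemma qz_cover_iff:
  fixes p q :: qz
  shows "p < q \<and> (\<nexists>c. p < c \<and> c < q) \<longleftrightarrow> q = (fst p, snd p + 1)"
proof
  assume cover: "p < q \<and> (\<nexists>c. p < c \<and> c < q)"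
  show "q = (fst p, snd p + 1)"
  proof (rule ccontr)
    assume "q \<noteq> (fst p, snd p + 1)"
    then have "(fst p, snd p + 1) < q" using cover by (auto simp: less_prod_def prod_eq_iff)
    moreover have "p < (fst p, snd p + 1)" by (simp add: less_prod_def)
    ultimately show False using cover by blast
  qed
next
  assume "q = (fst p, snd p + 1)"
  then show "p < q \<and> (\<nexists>c. p < c \<and> c < q)" by (auto simp: less_prod_def)
qed

text \<open>If the cut split a vertical, the first point of that vertical outside the cut would be
  mapped to a least element of \<open>Q \<times> Z\<close>.\<close>
lemma qz_rotation_cut_vertical:
  fixes f :: "qz \<Rightarrow> qz"
  assumes cut: "rotation_cut I f" and "surj f"
  shows "(r, z) \<in> I \<longleftrightarrow> (r, z') \<in> I"
proof -
  have "\<not> ((r, u) \<in> I \<and> (r, v) \<notin> I)" for u v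
  proof
    assume uv: "(r, u) \<in> I \<and> (r, v) \<notin> I"
    moreover have "\<not> (r, v) < (r, u)"
      using rotation_cut_down_closed[OF cut] uv by blast
    ultimately have "u < v" by (cases "u = v") (auto simp: less_prod_def)
    then obtain k where k: "(r, k) \<in> I" "(r, k + 1) \<notin> I"
      using int_exists_step[of "\<lambda>k. (r, k) \<in> I" u v] uv by blast
    have "(r, k + 1) \<le> x" if "x \<notin> I" for x
    proof (rule ccontr)
      assume "\<not> (r, k + 1) \<le> x"
      then have "x = (r, k) \<or> x < (r, k)" by (cases x) (auto simp: less_prod_def)
      then show False using rotation_cut_down_closed[OF cut] k(1) \<open>x \<notin> I\<close> by blast
    qed
    then have "f (r, k + 1) \<le> y" for y
      using rotation_cut_minimum[OF cut \<open>surj f\<close> k(2)] by blast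
    moreover have "(fst (f (r, k + 1)), snd (f (r, k + 1)) - 1) < f (r, k + 1)"
      by (simp add: less_prod_def)
    ultimately show False by (meson leD)
  qed
  then show ?thesis by blast
qed

lemma int_shift_form:
  fixes \<phi> :: "int \<Rightarrow> 'a \<times> int"
  assumes step: "\<And>z. \<phi> (z + 1) = (fst (\<phi> z), snd (\<phi> z) + 1)"
  shows "\<phi> z = (fst (\<phi> 0), snd (\<phi> 0) + z)"
proof (induction z rule: int_induct[where k = 0])
  case (step1 i)
  then show ?case using step[of i] by simp
next
  case (step2 i)
  then show ?case using step[of "i - 1"] by (simp add: prod_eq_iff)
qed simp

lemma initiates_if_shift:
  fixes f :: "qz \<Rightarrow> qz"
  assumes shift: "\<And>r z. f (r, z) = (h r, c r + z)"
  shows "initiates f h"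
proof -
  have "f ` vertical a = vertical (h a)" for a
  proof
    show "f ` vertical a \<subseteq> vertical (h a)"
      by (auto simp: vertical_def shift)
    show "vertical (h a) \<subseteq> f ` vertical a"
    proof
      fix p assume "p \<in> vertical (h a)"
      then have "p = f (a, snd p - c a)" by (cases p) (simp add: vertical_def shift)
      then show "p \<in> f ` vertical a" by (simp add: vertical_def)
    qed
  qed
  then show ?thesis unfolding initiates_def systemic_def by blast
qed

lemma positive_if_shift:
  fixes f :: "qz \<Rightarrow> qz"
  assumes shift: "\<And>r z. f (r, z) = (h r, c r + z)"
  shows "positive f"
  using initiates_if_shift[OF shift]
  unfolding positive_def initiates_def by (simp add: shift qz_less_def)

lemma bij_if_shift:
  fixes f :: "qz \<Rightarrow> qz"
  assumes shift: "\<And>r z. f (r, z) = (h r, c r + z)" and "bij f"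
  shows "bij h"
proof (rule bijI)
  show "inj h"
  proof (rule injI)
    fix a b assume "h a = h b"
    then have "f (a, 0) = f (b, c a - c b)" by (simp add: shift)
    then show "a = b" using bij_is_inj[OF \<open>bij f\<close>] by (auto dest: injD)
  qed
  have "s \<in> range h" for s
  proof -
    obtain p where "f p = (s, 0)" using bij_is_surj[OF \<open>bij f\<close>] by (metis surjD)
    then have "s = h (fst p)" by (cases p) (simp add: shift)
    then show ?thesis by blast
  qed
  then show "surj h" by blast
qed

lemma rotation_type_if_rotation_cut_shift:
  fixes f :: "qz \<Rightarrow> qz"
  assumes shift: "\<And>r z. f (r, z) = (h r, c r + z)" and "bij h"
    and cut: "rotation_cut (J \<times> UNIV) f"
  shows "rotation_type h"
proof -
  have h_less: "h a < h b" if "f (a, 0) < f (b, 0)" "a \<noteq> b" for a b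
  proof -
    have "h a \<le> h b" using that(1) by (auto simp: shift less_prod_def)
    moreover have "h a \<noteq> h b" using bij_is_inj[OF \<open>bij h\<close>] that(2) by (auto dest: injD)
    ultimately show ?thesis by simp
  qed
  have "is_section J (- J)"
    unfolding is_section_def
  proof (intro conjI ballI)
    fix a b assume "a \<in> J" "b \<in> - J"
    then have "\<not> (b, 0::int) < (a, 0)"
      using rotation_cut_down_closed[OF cut, of "(b, 0)" "(a, 0)"] by auto
    moreover have "a \<noteq> b" using \<open>a \<in> J\<close> \<open>b \<in> - J\<close> by auto
    ultimately show "a < b" by (auto simp: less_prod_def)
  qed auto
  moreover have "strict_mono_on J h" "strict_mono_on (- J) h"
    using rotation_cut_mono_inside[OF cut] rotation_cut_mono_outside[OF cut] h_less
    by (auto intro!: strict_mono_onI simp: less_prod_def)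
  moreover have "\<forall>a\<in>J. \<forall>b\<in>- J. h b < h a"
    using rotation_cut_crossing[OF cut] h_less by fastforce
  ultimately show ?thesis
    unfolding rotation_type_def using \<open>bij h\<close> by blast
qed

lemma positive_rotation_if_cyclic_preserving:
  fixes g :: "qz \<Rightarrow> qz"
  assumes "bij g" and "cyclic_preserving g"
  shows "positive g \<and> (\<exists>h. initiates g h \<and> rotation_type h)"
proof -
  obtain I where cut: "rotation_cut I g"
    using rotation_cut_if_cyclic_preserving[OF bij_is_inj] assms by blast
  have surj: "surj g" using \<open>bij g\<close> by (rule bij_is_surj)
  have vertical: "(r, z) \<in> I \<longleftrightarrow> (r, z') \<in> I" for r z z'
    using qz_rotation_cut_vertical[OF cut surj] .
  have I_eq: "I = {r. (r, 0) \<in> I} \<times> UNIV"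
    using vertical by auto
  have step: "g (r, z + 1) = (fst (g (r, z)), snd (g (r, z)) + 1)" for r z
  proof -
    have "(r, z) < (r, z + 1) \<and> (\<nexists>c. (r, z) < c \<and> c < (r, z + 1))"
      using qz_cover_iff[of "(r, z)" "(r, z + 1)"] by simp
    then have "g (r, z) < g (r, z + 1) \<and> (\<nexists>c. g (r, z) < c \<and> c < g (r, z + 1))"
      using rotation_cut_preserves_cover[OF cut surj] vertical by blast
    then show ?thesis using qz_cover_iff by blast
  qed
  define h c where "h r = fst (g (r, 0))" and "c r = snd (g (r, 0))" for r
  have shift: "g (r, z) = (h r, c r + z)" for r z
    using int_shift_form[of "\<lambda>z. g (r, z)"] step unfolding h_def c_def by blast
  have "bij h" using bij_if_shift[OF shift \<open>bij g\<close>] .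
  then have "rotation_type h"
    using rotation_type_if_rotation_cut_shift[OF shift] cut I_eq by metis
  then show ?thesis
    using positive_if_shift[OF shift] initiates_if_shift[OF shift] by blast
qed

lemma fst_apply_if_initiates:
  assumes "initiates g h"
  shows "fst (g p) = h (fst p)"
proof -
  have "g p \<in> g ` vertical (fst p)" by (cases p) (auto simp: vertical_def)
  then show ?thesis using assms unfolding initiates_def vertical_def by auto
qed

lemma positive_initiates_less:
  fixes g :: "qz \<Rightarrow> qz"
  assumes "positive g" and "initiates g h" and "p < q"
    and "fst p = fst q \<or> h (fst p) < h (fst q)"
  shows "g p < g q"
proof (cases "fst p = fst q")
  case True
  then have "snd p < snd q" using \<open>p < q\<close> by (auto simp: less_prod_def)
  then show ?thesis
    using \<open>positive g\<close> True unfolding positive_def qz_less_iff_less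
    by (metis prod.collapse)
next
  case False
  then show ?thesis
    using assms(4) fst_apply_if_initiates[OF \<open>initiates g h\<close>] by (simp add: less_prod_def)
qed

lemma rotation_cut_if_positive_rotation:
  fixes g :: "qz \<Rightarrow> qz"
  assumes "positive g" and "initiates g h" and "rotation_type h"
  shows "\<exists>I. rotation_cut I g"
proof -
  obtain J J' where J_section: "is_section J J'" and "strict_mono_on J h"
    and "strict_mono_on J' h" and crossing: "\<forall>a\<in>J. \<forall>b\<in>J'. h b < h a"
    using \<open>rotation_type h\<close> unfolding rotation_type_def by blast
  have J': "J' = - J" using J_section unfolding is_section_def by auto
  have fst_le: "fst p \<le> fst q" if "p < q" for p q :: qz
    using that by (auto simp: less_prod_def)
  have "rotation_cut (J \<times> UNIV) g"
  proof (rule rotation_cutI)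
    fix x y :: qz assume "x < y" "y \<in> J \<times> UNIV"
    show "x \<in> J \<times> UNIV"
    proof (rule ccontr)
      assume "x \<notin> J \<times> UNIV"
      then have "fst x \<in> J'" "fst y \<in> J"
        using J' \<open>y \<in> J \<times> UNIV\<close> by (auto simp: mem_Times_iff)
      then have "fst y < fst x"
        using J_section unfolding is_section_def by blast
      then show False using fst_le[OF \<open>x < y\<close>] by simp
    qed
  next
    fix x y :: qz assume "x < y" and same_side: "x \<in> J \<times> UNIV \<longleftrightarrow> y \<in> J \<times> UNIV"
    have "fst x \<in> J \<and> fst y \<in> J \<or> fst x \<in> J' \<and> fst y \<in> J'"
      using J' same_side by (auto simp: mem_Times_iff)
    then have "fst x < fst y \<Longrightarrow> h (fst x) < h (fst y)"
      using \<open>strict_mono_on J h\<close> \<open>strict_mono_on J' h\<close> by (auto dest: strict_mono_onD)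
    then have "fst x = fst y \<or> h (fst x) < h (fst y)"
      using fst_le[OF \<open>x < y\<close>] by fastforce
    then show "g x < g y"
      using positive_initiates_less[OF assms(1,2) \<open>x < y\<close>] by blast
  next
    fix a b :: qz assume "a \<in> J \<times> UNIV" "b \<notin> J \<times> UNIV"
    then have "h (fst b) < h (fst a)" using crossing J' by (auto simp: mem_Times_iff)
    then show "g b < g a" using fst_apply_if_initiates[OF assms(2)] by (simp add: less_prod_def)
  qed
  then show ?thesis ..
qed

lemma cyclic_preserving_iff_positive_rotation:
  fixes g :: "qz \<Rightarrow> qz"
  assumes "bij g"
  shows "cyclic_preserving g \<longleftrightarrow> positive g \<and> (\<exists>h. initiates g h \<and> rotation_type h)"
  using positive_rotation_if_cyclic_preserving[OF assms] rotation_cut_if_positive_rotation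
    cyclic_preserving_if_rotation_cut by blast

section \<open>The point reflection\<close>

lemma qz_neg_less_neg_iff: "- p < - q \<longleftrightarrow> q < (p::qz)"
  by (auto simp: less_prod_def)

lemma qz_cyclic_neg:
  fixes a b c :: qz
  assumes "distinct [a, b, c]"
  shows "cyclic (- a) (- b) (- c) \<longleftrightarrow> \<not> cyclic a b c"
proof -
  have "cyclic (- a) (- b) (- c) \<longleftrightarrow> cyclic a c b"
    unfolding cyclic_def qz_neg_less_neg_iff by auto
  also have "\<dots> \<longleftrightarrow> \<not> cyclic a b c" using cyclic_swap[OF assms] .
  finally show ?thesis .
qed

lemma cyclic_preserving_neg_comp_iff:
  fixes g :: "'a::linorder \<Rightarrow> qz"
  assumes "inj g"
  shows "cyclic_preserving (uminus \<circ> g) \<longleftrightarrow> cyclic_reversing g"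
proof -
  have "cyclic (- g x) (- g y) (- g z) \<longleftrightarrow> \<not> cyclic (g x) (g y) (g z)"
    if "distinct [x, y, z]" for x y z
    using qz_cyclic_neg that \<open>inj g\<close> by (simp add: inj_eq)
  then show ?thesis
    unfolding cyclic_preserving_def cyclic_reversing_def by auto
qed

lemma qz_neg_vertical: "uminus ` vertical r = vertical (- r)"
proof
  show "uminus ` vertical r \<subseteq> vertical (- r)"
    by (auto simp: vertical_def)
  show "vertical (- r) \<subseteq> uminus ` vertical r"
  proof
    fix p assume "p \<in> vertical (- r)"
    then have "p = - (r, - snd p)" by (cases p) (simp add: vertical_def)
    moreover have "(r, - snd p) \<in> vertical r" by (simp add: vertical_def)
    ultimately show "p \<in> uminus ` vertical r" by blast
  qed
qed

lemma neg_comp_image_vertical: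
  "g ` vertical a = vertical r \<Longrightarrow> (uminus \<circ> g) ` vertical a = vertical (- r)"
  by (metis image_comp qz_neg_vertical)

lemma initiates_neg_comp: "initiates g h \<Longrightarrow> initiates (uminus \<circ> g) (uminus \<circ> h)"
  unfolding initiates_def systemic_def by (metis comp_apply neg_comp_image_vertical)

lemma initiates_neg_comp_iff: "initiates (uminus \<circ> g) h \<longleftrightarrow> initiates g (uminus \<circ> h)"
  using initiates_neg_comp[of g "uminus \<circ> h"] initiates_neg_comp[of "uminus \<circ> g" h]
  by (auto simp: comp_def)

lemma systemic_neg_comp_iff: "systemic (uminus \<circ> g) \<longleftrightarrow> systemic g"
proof -
  have "systemic (uminus \<circ> f)" if "systemic f" for f
    using that neg_comp_image_vertical unfolding systemic_def by metis
  from this[of g] this[of "uminus \<circ> g"] show ?thesis by (auto simp: comp_def)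
qed

lemma positive_neg_comp_iff: "positive (uminus \<circ> g) \<longleftrightarrow> negative g"
  unfolding positive_def negative_def qz_less_iff_less systemic_neg_comp_iff
  by (simp add: qz_neg_less_neg_iff)

lemma rotation_type_neg_comp_iff:
  "rotation_type (uminus \<circ> h) \<longleftrightarrow> reflection_type (h :: rat \<Rightarrow> rat)"
proof -
  have "bij (uminus \<circ> h) \<longleftrightarrow> bij h"
    using bij_comp[OF _ bij_uminus, of h] bij_comp[OF _ bij_uminus, of "uminus \<circ> h"]
    by (auto simp: comp_def)
  moreover have "strict_mono_on J (uminus \<circ> h) \<longleftrightarrow> strict_antimono_on J h" for J
    unfolding monotone_on_def by simp
  ultimately show ?thesis
    unfolding rotation_type_def reflection_type_def by simp
qed

lemma cyclic_reversing_iff_negative_reflection: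
  fixes g :: "qz \<Rightarrow> qz"
  assumes "bij g"
  shows "cyclic_reversing g \<longleftrightarrow> negative g \<and> (\<exists>h. initiates g h \<and> reflection_type h)"
proof -
  have "bij (uminus \<circ> g)" using assms bij_uminus by (rule bij_comp)
  have "cyclic_reversing g \<longleftrightarrow> cyclic_preserving (uminus \<circ> g)"
    using cyclic_preserving_neg_comp_iff[OF bij_is_inj[OF assms]] by simp
  also have "\<dots> \<longleftrightarrow> negative g \<and> (\<exists>h. initiates g (uminus \<circ> h) \<and> rotation_type h)"
    using cyclic_preserving_iff_positive_rotation[OF \<open>bij (uminus \<circ> g)\<close>]
    by (simp add: positive_neg_comp_iff initiates_neg_comp_iff)
  also have "\<dots> \<longleftrightarrow> negative g \<and> (\<exists>h. initiates g h \<and> reflection_type h)"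
  proof -
    have neg_neg: "uminus \<circ> (uminus \<circ> h) = h" for h :: "rat \<Rightarrow> rat"
      by (simp add: comp_def)
    show ?thesis by (metis neg_neg rotation_type_neg_comp_iff)
  qed
  finally show ?thesis .
qed

theorem mainTheorem10:
  shows "Gamma_Sep =
    {g. bij g \<and>
       ((positive g \<and> (\<exists>h. initiates g h \<and> rotation_type h)) \<or>
        (negative g \<and> (\<exists>h. initiates g h \<and> reflection_type h)))}"
  using Gamma_Sep_iff cyclic_preserving_iff_positive_rotation
    cyclic_reversing_iff_negative_reflection
  by blast

end
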